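(* Let $(\mathfrak{g}_0,[\cdot,\cdot]_0,\langle\cdot,\cdot\rangle_0)$ be a Euclidean Lie algebra, let $\mu\in\mathbb{R}$, $b\in\mathfrak{g}_0$, and let $K,D:\mathfrak{g}_0\to\mathfrak{g}_0$ be endomorphisms with $K$ skew-symmetric, such that the double extension $\mathfrak{g}=\mathbb{R}e\oplus\mathfrak{g}_0\oplus\mathbb{R}\bar e$ with parameters $(K,D,\mu,b)$ (described in the context) is a Lie algebra. Then the Lorentzian Lie algebra $(\mathfrak{g},\langle\cdot,\cdot\rangle)$ is Einstein if and only if $\mathfrak{g}$ is Ricci-flat, $(\mathfrak{g}_0,\langle\cdot,\cdot\rangle_0)$ is Ricci-flat, and for all $u\in\mathfrak{g}_0$: $$4\,\mathrm{tr}(\mathrm{ad}^0_b)+4\mu\,\mathrm{tr}(D)-2\,\mathrm{tr}(D^2)-2\,\mathrm{tr}(DD^* )-\mathrm{tr}(K^2)=0,$$ $$\mathrm{tr}(J^0_u\circ K)+2\,\mathrm{tr}\big((D+D^* )\circ\mathrm{ad}^0_u\big)+2\,\mathrm{tr}(\mathrm{ad}_{D^*(u)})-2\,\mathrm{tr}(\mathrm{ad}_{K(u)})=0.$$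
   Context: Double extension: $\mathfrak{g}=\mathbb{R}e\oplus\mathfrak{g}_0\oplus\mathbb{R}\bar e$ with Lorentzian form $\langle e,e\rangle=\langle\bar e,\bar e\rangle=0$, $\langle e,\bar e\rangle=1$, $\mathfrak{g}_0\perp\{e,\bar e\}$, $\langle\cdot,\cdot\rangle|_{\mathfrak{g}_0}=\langle\cdot,\cdot\rangle_0$, and skew-symmetric bracket $[\bar e,e]=\mu e$, $[\bar e,u]=D(u)+\langle b,u\rangle_0e$, $[u,v]=[u,v]_0+\langle K(u),v\rangle_0e$, $[e,u]=0$ for $u,v\in\mathfrak{g}_0$. Here $\mathrm{ad}^0$ is the adjoint representation of $\mathfrak{g}_0$, $\mathrm{ad}$ that of $\mathfrak{g}$, adjoints $^*$ are with respect to $\langle\cdot,\cdot\rangle_0$, and $J^0_u(v)=(\mathrm{ad}^0_v)^*(u)$. The Levi-Civita product $\mathrm{L}$ of a metric Lie algebra is given by $2\langle \mathrm{L}_uv,w\rangle=\langle[u,v],w\rangle+\langle[w,u],v\rangle+\langle[w,v],u\rangle$, curvature $K(u,v)=\mathrm{L}_{[u,v]}-[\mathrm{L}_u,\mathrm{L}_v]$, Ricci operator $\langle\mathrm{Ric}(u),v\rangle=\mathrm{tr}(w\mapsto K(u,w)v)$; Einstein means $\mathrm{Ric}=\lambda\mathrm{Id}$ for some $\lambda\in\mathbb{R}$, Ricci-flat means $\mathrm{Ric}=0$. *)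

theory Defs
  imports "HOL-Analysis.Analysis"
begin

definition ltrace :: "('v::euclidean_space \<Rightarrow> 'v) \<Rightarrow> real" where
  "ltrace f = (\<Sum>i\<in>Basis. inner (f i) i)"

definition lie_algebra :: "('v::real_vector \<Rightarrow> 'v \<Rightarrow> 'v) \<Rightarrow> bool" where
  "lie_algebra br \<longleftrightarrow> bilinear br \<and> (\<forall>x. br x x = 0) \<and>
     (\<forall>x y z. br x (br y z) + br y (br z x) + br z (br x y) = 0)"

definition LC :: "('v \<Rightarrow> 'v \<Rightarrow> real) \<Rightarrow> ('v \<Rightarrow> 'v \<Rightarrow> 'v) \<Rightarrow> 'v \<Rightarrow> 'v \<Rightarrow> 'v" where
  "LC m br u v = (THE z. \<forall>w. 2 * m z w = m (br u v) w + m (br w u) v + m (br w v) u)"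

definition curv :: "('v::real_vector \<Rightarrow> 'v \<Rightarrow> real) \<Rightarrow> ('v \<Rightarrow> 'v \<Rightarrow> 'v) \<Rightarrow> 'v \<Rightarrow> 'v \<Rightarrow> 'v \<Rightarrow> 'v" where
  "curv m br u v w = LC m br (br u v) w - (LC m br u (LC m br v w) - LC m br v (LC m br u w))"

definition Ric :: "('v::euclidean_space \<Rightarrow> 'v \<Rightarrow> real) \<Rightarrow> ('v \<Rightarrow> 'v \<Rightarrow> 'v) \<Rightarrow> 'v \<Rightarrow> 'v" where
  "Ric m br u = (THE z. \<forall>v. m z v = ltrace (\<lambda>w. curv m br u w v))"

definition einstein :: "('v::euclidean_space \<Rightarrow> 'v \<Rightarrow> real) \<Rightarrow> ('v \<Rightarrow> 'v \<Rightarrow> 'v) \<Rightarrow> bool" where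
  "einstein m br \<longleftrightarrow> (\<exists>c::real. \<forall>u. Ric m br u = c *\<^sub>R u)"

definition ricci_flat :: "('v::euclidean_space \<Rightarrow> 'v \<Rightarrow> real) \<Rightarrow> ('v \<Rightarrow> 'v \<Rightarrow> 'v) \<Rightarrow> bool" where
  "ricci_flat m br \<longleftrightarrow> (\<forall>u. Ric m br u = 0)"

text \<open>Double extension g = R e + g0 + R ebar; an element (s,u,t) stands for
  s e + u + t ebar.\<close>
definition dext_metric :: "real \<times> 'a::real_inner \<times> real \<Rightarrow> real \<times> 'a \<times> real \<Rightarrow> real" where
  "dext_metric x y = (case x of (s,u,t) \<Rightarrow> case y of (s',u',t') \<Rightarrow>
      s * t' + t * s' + inner u u')"

definition dext_bracket ::
  "('a::real_inner \<Rightarrow> 'a \<Rightarrow> 'a) \<Rightarrow> ('a \<Rightarrow> 'a) \<Rightarrow> ('a \<Rightarrow> 'a) \<Rightarrow> real \<Rightarrow> 'a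
    \<Rightarrow> real \<times> 'a \<times> real \<Rightarrow> real \<times> 'a \<times> real \<Rightarrow> real \<times> 'a \<times> real" where
  "dext_bracket br0 K D \<mu> b x y = (case x of (s,u,t) \<Rightarrow> case y of (s',u',t') \<Rightarrow>
      (\<mu> * (t * s' - s * t') + inner (K u) u' + t * inner b u' - t' * inner b u,
       br0 u u' + t *\<^sub>R D u' - t' *\<^sub>R D u,
       0))"

end

(* The null vector e = (1, 0, 0) is annihilated by the Levi-Civita product from both sides
   (L_e = 0 and L_x e = 0), so every curvature term involving e vanishes and Ric e = 0: an
   Einstein double extension has Einstein constant 0, i.e. Einstein and Ricci-flat coincide.
   It remains to see that Ricci-flatness implies the other conditions. The Ricci form of g
   restricted to g0 is that of g0, while 4 ric(ebar, ebar) and -4 ric(ebar, u) are the two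
   trace expressions, the latter as soon as g0 is unimodular. Unimodularity follows from
   ric0(H, H) = -|ad_H + ad_H^*|^2 / 4 for the mean curvature vector H, which is orthogonal
   to [g0, g0]: if this vanishes, ad_H is skew, so |H|^2 = tr ad_H = 0. *)

theory Submission
  imports Defs
begin

lemma ltrace_add: "ltrace (\<lambda>x. f x + g x) = ltrace f + ltrace g"
  unfolding ltrace_def by (simp add: inner_add_left sum.distrib)

lemma ltrace_diff: "ltrace (\<lambda>x. f x - g x) = ltrace f - ltrace g"
  unfolding ltrace_def by (simp add: inner_diff_left sum_subtractf)

lemma ltrace_scale: "ltrace (\<lambda>x. c *\<^sub>R f x) = c * ltrace f"
  unfolding ltrace_def by (simp add: sum_distrib_left)

lemma ltrace_comp_commute:
  fixes f g :: "'a::euclidean_space \<Rightarrow> 'a"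
  assumes "linear f" "linear g"
  shows "ltrace (\<lambda>x. f (g x)) = ltrace (\<lambda>x. g (f x))"
proof -
  have expand: "ltrace (\<lambda>x. f (g x)) = (\<Sum>i\<in>Basis. \<Sum>j\<in>Basis. (g i \<bullet> j) * (f j \<bullet> i))"
    if "linear f" for f g :: "'a \<Rightarrow> 'a"
  proof -
    have "f (g i) \<bullet> i = (\<Sum>j\<in>Basis. (g i \<bullet> j) * (f j \<bullet> i))" for i
      using euclidean_inner[of "g i" "adjoint f i"]
      by (simp add: adjoint_clauses[OF that] inner_commute)
    then show ?thesis unfolding ltrace_def by simp
  qed
  show ?thesis
    unfolding expand[OF assms(1)] expand[OF assms(2)]
    by (subst sum.swap) (simp add: mult.commute)
qed

lemma ltrace_real: "ltrace (f :: real \<Rightarrow> real) = f 1"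
  by (simp add: ltrace_def)

lemma ltrace_prod:
  fixes f :: "'a::euclidean_space \<times> 'b::euclidean_space \<Rightarrow> 'a \<times> 'b"
  shows "ltrace f = ltrace (\<lambda>x. fst (f (x, 0))) + ltrace (\<lambda>y. snd (f (0, y)))"
proof -
  have "inj_on (\<lambda>x. (x::'a, 0::'b)) Basis" "inj_on (\<lambda>y. (0::'a, y::'b)) Basis"
    by (auto intro!: inj_onI)
  then show ?thesis
    unfolding ltrace_def Basis_prod_def
    by (subst sum.union_disjoint) (auto simp: sum.reindex inner_prod_def)
qed


lemma LC_eqI:
  assumes nondeg: "\<And>z z'. (\<And>w. m z w = m z' w) \<Longrightarrow> z = z'"
    and koszul: "\<And>w. 2 * m z w = m (br u v) w + m (br w u) v + m (br w v) u"
  shows "LC m br u v = z"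
  unfolding LC_def
proof (rule the_equality)
  fix z' assume "\<forall>w. 2 * m z' w = m (br u v) w + m (br w u) v + m (br w v) u"
  then show "z' = z"
    using koszul by (intro nondeg) (metis mult_cancel_left zero_neq_numeral)
qed (use koszul in blast)

lemma Ric_eqI:
  assumes nondeg: "\<And>z z'. (\<And>w. m z w = m z' w) \<Longrightarrow> z = z'"
    and "\<And>v. m z v = ltrace (\<lambda>w. curv m br u w v)"
  shows "Ric m br u = z"
  unfolding Ric_def by (rule the_equality) (use assms in auto)

locale euclidean_lie_algebra =
  fixes br :: "'a::euclidean_space \<Rightarrow> 'a \<Rightarrow> 'a"
  assumes lie: "lie_algebra br"
begin

lemma bilinear_br: "bilinear br"
  and br_self: "br x x = 0"
  and jacobi: "br x (br y z) + br y (br z x) + br z (br x y) = 0"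
  using lie unfolding lie_algebra_def by blast+

lemma br_simps [simp]:
  "br (x + y) z = br x z + br y z" "br x (y + z) = br x y + br x z"
  "br (x - y) z = br x z - br y z" "br x (y - z) = br x y - br x z"
  "br (c *\<^sub>R x) y = c *\<^sub>R br x y" "br x (c *\<^sub>R y) = c *\<^sub>R br x y"
  "br (- x) y = - br x y" "br x (- y) = - br x y"
  "br 0 y = 0" "br x 0 = 0"
  using bilinear_br by (simp_all add: bilinear_ladd bilinear_radd bilinear_lsub bilinear_rsub
      bilinear_lmul bilinear_rmul bilinear_lneg bilinear_rneg bilinear_lzero bilinear_rzero)

lemma br_anticomm: "br y x = - br x y"
proof -
  have "br (x + y) (x + y) = br x x + br x y + (br y x + br y y)"
    by simp
  then have "br x y + br y x = 0"
    by (simp add: br_self)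
  then show ?thesis
    by (simp add: add_eq_0_iff)
qed

lemma linear_br: "linear (br x)"
  using bilinear_br unfolding bilinear_def by auto

lemma linear_adjoint_br_left: "linear (\<lambda>x. adjoint (br x) y)"
  by (rule linearI; rule vector_eq_rdot[THEN iffD1])
    (simp_all add: adjoint_clauses[OF linear_br] inner_add_left inner_add_right)

lemma inner_adjoint_br [simp]:
  "adjoint (br x) y \<bullet> z = y \<bullet> br x z" "z \<bullet> adjoint (br x) y = br x z \<bullet> y"
  by (simp_all add: adjoint_clauses[OF linear_br])

lemma LC_eq: "LC inner br u v = (1/2) *\<^sub>R (br u v - adjoint (br u) v - adjoint (br v) u)"
proof (rule LC_eqI[OF vector_eq_rdot[THEN iffD1, rule_format]])
  fix w
  show "2 * ((1/2) *\<^sub>R (br u v - adjoint (br u) v - adjoint (br v) u) \<bullet> w)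
      = br u v \<bullet> w + br w u \<bullet> v + br w v \<bullet> u"
    using br_anticomm[of w u] br_anticomm[of w v]
    by (simp add: inner_diff_left inner_diff_right inner_commute)
qed

lemma inner_LC: "LC inner br u v \<bullet> w = (br u v \<bullet> w - v \<bullet> br u w - u \<bullet> br v w) / 2"
  by (simp add: LC_eq inner_diff_left)

lemma LC_simps [simp]:
  "LC inner br (x + y) v = LC inner br x v + LC inner br y v"
  "LC inner br u (x + y) = LC inner br u x + LC inner br u y"
  "LC inner br (x - y) v = LC inner br x v - LC inner br y v"
  "LC inner br u (x - y) = LC inner br u x - LC inner br u y"
  "LC inner br (c *\<^sub>R x) v = c *\<^sub>R LC inner br x v"
  "LC inner br u (c *\<^sub>R x) = c *\<^sub>R LC inner br u x"
  "LC inner br (- x) v = - LC inner br x v"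
  "LC inner br u (- x) = - LC inner br u x"
  "LC inner br 0 v = 0"
  "LC inner br u 0 = 0"
  by (rule vector_eq_rdot[THEN iffD1];
      simp add: inner_LC inner_add_left inner_add_right inner_diff_left inner_diff_right
        algebra_simps add_divide_distrib diff_divide_distrib)+

lemma ltrace_br_br: "ltrace (br (br x y)) = 0"
proof -
  have "br (br x y) = (\<lambda>z. br x (br y z) - br y (br x z))"
  proof
    fix z
    show "br (br x y) z = br x (br y z) - br y (br x z)"
      using jacobi[of x y z] br_anticomm[of z "br x y"] br_anticomm[of z x]
      by (simp add: algebra_simps eq_neg_iff_add_eq_0)
  qed
  then show ?thesis
    by (simp add: ltrace_diff ltrace_comp_commute[OF linear_br linear_br])
qed

definition mean_curv :: 'a where
  "mean_curv = adjoint (\<lambda>x. ltrace (br x)) 1"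

lemma ltrace_br_mean_curv: "ltrace (br x) = x \<bullet> mean_curv"
proof -
  have "linear (\<lambda>x. ltrace (br x))"
    by (rule linearI) (simp_all add: ltrace_def inner_add_left sum.distrib sum_distrib_left)
  then show ?thesis
    by (simp add: mean_curv_def adjoint_clauses)
qed

lemma mean_curv_orthogonal_br: "mean_curv \<bullet> br x y = 0"
  using ltrace_br_br[of x y] by (simp add: ltrace_br_mean_curv inner_commute)

lemma ric_mean_curv:
  "4 * ltrace (\<lambda>w. curv inner br mean_curv w mean_curv)
     = - (\<Sum>i\<in>Basis. (br mean_curv i + adjoint (br mean_curv) i) \<bullet> (br mean_curv i + adjoint (br mean_curv) i))"
proof -
  let ?h = mean_curv
  let ?X = "br ?h" and ?Y = "adjoint (br ?h)"
  have LC_h_h: "LC inner br ?h ?h = 0"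
    by (rule vector_eq_rdot[THEN iffD1]) (simp add: inner_LC mean_curv_orthogonal_br br_self)
  have pointwise: "4 * (curv inner br ?h i ?h \<bullet> i)
      = - 2 * (?X i \<bullet> ?Y i) - 3 * (?X i \<bullet> ?X i) + ?Y i \<bullet> ?Y i" for i
  proof -
    have p1: "LC inner br (?X i) ?h \<bullet> i = - (?X (?X i) \<bullet> i + ?X i \<bullet> ?X i) / 2"
      using br_anticomm[of ?h "?X i"] by (simp add: inner_LC mean_curv_orthogonal_br inner_commute[of i])
    have p2: "LC inner br ?h y \<bullet> i = (y \<bullet> ?Y i - y \<bullet> ?X i) / 2" for y
      by (simp add: inner_LC mean_curv_orthogonal_br)
    have p3: "LC inner br i ?h \<bullet> z = - (?X i \<bullet> z + i \<bullet> ?X z) / 2" for z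
      using br_anticomm[of ?h i] by (simp add: inner_LC mean_curv_orthogonal_br)
    have q1: "i \<bullet> ?X (?Y i) = ?Y i \<bullet> ?Y i"
      by (subst inner_commute) (rule inner_adjoint_br(2)[symmetric])
    have q2: "i \<bullet> ?X (?X i) = ?X i \<bullet> ?Y i" "?X (?X i) \<bullet> i = ?X i \<bullet> ?Y i"
      by (metis inner_adjoint_br(2) inner_commute)+
    have "curv inner br ?h i ?h \<bullet> i = LC inner br (?X i) ?h \<bullet> i - LC inner br ?h (LC inner br i ?h) \<bullet> i"
      unfolding curv_def LC_h_h by (simp add: inner_diff_left)
    then show ?thesis
      unfolding p1 p2 p3 q1 q2 by (simp add: field_simps)
  qed
  have adjoint_square: "(\<Sum>i\<in>Basis. ?Y i \<bullet> ?Y i) = (\<Sum>i\<in>Basis. ?X i \<bullet> ?X i)"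
  proof -
    have "(\<Sum>i\<in>Basis. ?Y i \<bullet> ?Y i) = ltrace (\<lambda>i. ?X (?Y i))"
      unfolding ltrace_def by (metis inner_adjoint_br(1) inner_commute)
    also have "\<dots> = ltrace (\<lambda>i. ?Y (?X i))"
      by (rule ltrace_comp_commute[OF linear_br adjoint_linear[OF linear_br]])
    also have "\<dots> = (\<Sum>i\<in>Basis. ?X i \<bullet> ?X i)"
      unfolding ltrace_def by simp
    finally show ?thesis .
  qed
  have "4 * ltrace (\<lambda>w. curv inner br ?h w ?h)
      = (\<Sum>i\<in>Basis. - 2 * (?X i \<bullet> ?Y i) - 3 * (?X i \<bullet> ?X i) + ?Y i \<bullet> ?Y i)"
    unfolding ltrace_def sum_distrib_left pointwise ..
  also have "\<dots> = - (\<Sum>i\<in>Basis. 2 * (?X i \<bullet> ?Y i) + ?X i \<bullet> ?X i + ?Y i \<bullet> ?Y i)"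
    using adjoint_square by (simp add: sum.distrib sum_subtractf sum_negf sum_distrib_left[symmetric])
  also have "\<dots> = - (\<Sum>i\<in>Basis. (?X i + ?Y i) \<bullet> (?X i + ?Y i))"
    by (simp add: inner_add_left inner_add_right inner_commute algebra_simps)
  finally show ?thesis .
qed

lemma ltrace_br_zero_if_ric_mean_curv:
  assumes "ltrace (\<lambda>w. curv inner br mean_curv w mean_curv) = 0"
  shows "ltrace (br x) = 0"
proof -
  let ?X = "br mean_curv" and ?Y = "adjoint (br mean_curv)"
  have "(\<Sum>i\<in>Basis. (?X i + ?Y i) \<bullet> (?X i + ?Y i)) = 0"
    using ric_mean_curv assms by simp
  then have skew: "?X i + ?Y i = 0" if "i \<in> Basis" for i
    using that by (subst (asm) sum_nonneg_eq_0_iff) auto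
  have "?X i \<bullet> i = 0" if "i \<in> Basis" for i
  proof -
    have "(?X i + ?Y i) \<bullet> i = 0"
      using skew[OF that] by simp
    then show ?thesis
      by (simp add: inner_add_left inner_add_right inner_commute algebra_simps)
  qed
  then have "mean_curv \<bullet> mean_curv = 0"
    using ltrace_br_mean_curv[of mean_curv] by (simp add: ltrace_def)
  then show ?thesis
    by (simp add: ltrace_br_mean_curv)
qed

lemma sum_Basis_br_symmetric:
  assumes "linear S" and S_sym: "\<And>x y. S x \<bullet> y = x \<bullet> S y"
  shows "(\<Sum>i\<in>Basis. br i (S i)) = 0"
proof -
  have "u \<bullet> (\<Sum>i\<in>Basis. br i (S i)) = 0" for u
  proof -
    let ?J = "\<lambda>i. adjoint (br i) u"
    have "u \<bullet> (\<Sum>i\<in>Basis. br i (S i)) = ltrace (\<lambda>i. S (?J i))"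
      unfolding ltrace_def inner_sum_right by (simp add: S_sym inner_commute[of u])
    also have "\<dots> = ltrace (\<lambda>i. ?J (S i))"
      by (rule ltrace_comp_commute[OF \<open>linear S\<close> linear_adjoint_br_left])
    also have "\<dots> = - (u \<bullet> (\<Sum>i\<in>Basis. br i (S i)))"
      unfolding ltrace_def inner_sum_right
      by (simp add: br_anticomm[of "S _"] sum_negf inner_commute[of u])
    finally show ?thesis by simp
  qed
  then show ?thesis
    using vector_eq_ldot[of "\<Sum>i\<in>Basis. br i (S i)" 0] by simp
qed

lemma ltrace_symmetric_LC_left:
  assumes "linear S" and S_sym: "\<And>x y. S x \<bullet> y = x \<bullet> S y"
  shows "ltrace (\<lambda>i. S (LC inner br i v)) = - ltrace (\<lambda>i. S (br v i))"
proof -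
  have pointwise: "2 * (S (LC inner br i v) \<bullet> i)
      = - (S (br v i) \<bullet> i) - v \<bullet> br i (S i) - br v (S i) \<bullet> i" for i
    using br_anticomm[of v i] by (simp add: S_sym inner_LC inner_commute[of i])
  have "2 * ltrace (\<lambda>i. S (LC inner br i v))
      = - ltrace (\<lambda>i. S (br v i)) - v \<bullet> (\<Sum>i\<in>Basis. br i (S i)) - ltrace (\<lambda>i. br v (S i))"
    unfolding ltrace_def sum_distrib_left pointwise
    by (simp add: inner_sum_right sum_subtractf sum_negf)
  then show ?thesis
    using sum_Basis_br_symmetric[OF assms] ltrace_comp_commute[OF linear_br \<open>linear S\<close>, of v]
    by simp
qed

lemma ltrace_LC_left: "ltrace (\<lambda>i. LC inner br i v) = - ltrace (br v)"
  using ltrace_symmetric_LC_left[OF linear_ident] by (simp add: inner_commute)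

lemma ltrace_skew_LC_left:
  assumes "linear K" and K_skew: "\<And>x y. K x \<bullet> y = - (x \<bullet> K y)"
  shows "2 * ltrace (\<lambda>i. K (LC inner br i v)) = - ltrace (\<lambda>i. adjoint (br (K i)) v)"
proof -
  have pointwise: "2 * (K (LC inner br i v) \<bullet> i)
      = - (K (br v i) \<bullet> i) - v \<bullet> br (K i) i + br v (K i) \<bullet> i" for i
    using br_anticomm[of v i] br_anticomm[of i "K i"]
    by (simp add: K_skew inner_LC inner_commute[of i] field_simps)
  have "2 * ltrace (\<lambda>i. K (LC inner br i v))
      = - ltrace (\<lambda>i. K (br v i)) - ltrace (\<lambda>i. adjoint (br (K i)) v) + ltrace (\<lambda>i. br v (K i))"
    unfolding ltrace_def sum_distrib_left pointwise
    by (simp add: sum_subtractf sum_negf sum.distrib inner_commute[of v])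
  then show ?thesis
    using ltrace_comp_commute[OF linear_br \<open>linear K\<close>, of v] by simp
qed

end

lemma dext_metric_nondeg:
  assumes "\<And>w. dext_metric z w = dext_metric z' w"
  shows "z = z'"
proof -
  obtain s u t s' u' t' where z: "z = (s, u, t)" and z': "z' = (s', u', t')"
    by (cases z, cases z') auto
  have "s = s'" "t = t'"
    using assms[of "(0, 0, 1)"] assms[of "(1, 0, 0)"] by (simp_all add: z z' dext_metric_def)
  moreover have "u = u'"
  proof (rule vector_eq_rdot[THEN iffD1, rule_format])
    fix v
    show "u \<bullet> v = u' \<bullet> v"
      using assms[of "(0, v, 0)"] by (simp add: z z' dext_metric_def)
  qed
  ultimately show ?thesis
    by (simp add: z z')
qed

lemma dext_metric_zero_left [simp]: "dext_metric 0 v = 0"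
  by (simp add: dext_metric_def zero_prod_def split_beta)

lemma dext_metric_represents:
  fixes f :: "real \<times> 'a::euclidean_space \<times> real \<Rightarrow> real"
  assumes "linear f"
  obtains z where "\<And>v. dext_metric z v = f v"
proof
  let ?f0 = "\<lambda>u. f (0, u, 0)"
  have "linear ?f0"
  proof (rule linearI)
    fix x y :: 'a and c :: real
    show "?f0 (x + y) = ?f0 x + ?f0 y"
      using linear_add[OF assms, of "(0, x, 0)" "(0, y, 0)"] by simp
    show "?f0 (c *\<^sub>R x) = c *\<^sub>R ?f0 x"
      using linear_scale[OF assms, of c "(0, x, 0)"] by simp
  qed
  fix v :: "real \<times> 'a \<times> real"
  obtain s u t where v: "v = (s, u, t)"
    by (cases v) auto
  have "f v = f (s *\<^sub>R (1, 0, 0) + (0, u, 0) + t *\<^sub>R (0, 0, 1))"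
    by (simp add: v)
  then have "f v = s * f (1, 0, 0) + f (0, u, 0) + t * f (0, 0, 1)"
    by (simp only: linear_add[OF assms] linear_scale[OF assms] real_scaleR_def)
  then show "dext_metric (f (0, 0, 1), adjoint ?f0 1, f (1, 0, 0)) v = f v"
    by (simp add: v dext_metric_def adjoint_clauses[OF \<open>linear ?f0\<close>] algebra_simps)
qed

locale double_extension = euclidean_lie_algebra br0
  for br0 :: "'a::euclidean_space \<Rightarrow> 'a \<Rightarrow> 'a" +
  fixes K D :: "'a \<Rightarrow> 'a" and \<mu> :: real and b :: 'a
  assumes linear_K: "linear K" and linear_D: "linear D"
    and K_skew: "\<And>u v. K u \<bullet> v = - (u \<bullet> K v)"
begin

abbreviation gbr :: "real \<times> 'a \<times> real \<Rightarrow> real \<times> 'a \<times> real \<Rightarrow> real \<times> 'a \<times> real" where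
  "gbr \<equiv> dext_bracket br0 K D \<mu> b"

lemma linear_adjoint_D: "linear (adjoint D)"
  by (rule adjoint_linear[OF linear_D])

lemma KD_simps [simp]:
  "K (x + y) = K x + K y" "K (x - y) = K x - K y" "K (c *\<^sub>R x) = c *\<^sub>R K x" "K (- x) = - K x" "K 0 = 0"
  "D (x + y) = D x + D y" "D (x - y) = D x - D y" "D (c *\<^sub>R x) = c *\<^sub>R D x" "D (- x) = - D x" "D 0 = 0"
  "adjoint D (x + y) = adjoint D x + adjoint D y" "adjoint D (x - y) = adjoint D x - adjoint D y"
  "adjoint D (c *\<^sub>R x) = c *\<^sub>R adjoint D x" "adjoint D (- x) = - adjoint D x" "adjoint D 0 = 0"
  using linear_K linear_D linear_adjoint_D
  by (simp_all add: linear_add linear_diff linear_scale linear_neg linear_0)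

lemma inner_adjoint_D [simp]: "adjoint D x \<bullet> y = x \<bullet> D y" "x \<bullet> adjoint D y = D x \<bullet> y"
  by (simp_all add: adjoint_clauses[OF linear_D])

(* A u = - L_u ebar for u in g0 *)
definition A :: "'a \<Rightarrow> 'a" where
  "A u = (1/2) *\<^sub>R (K u + D u + adjoint D u)"

lemma A_simps [simp]: "A (x + y) = A x + A y" "A (x - y) = A x - A y" "A (c *\<^sub>R x) = c *\<^sub>R A x"
  "A (- x) = - A x" "A 0 = 0"
  unfolding A_def by (simp_all add: algebra_simps)

lemma linear_A: "linear A"
  by (rule linearI) simp_all

definition dext_LC :: "real \<times> 'a \<times> real \<Rightarrow> real \<times> 'a \<times> real \<Rightarrow> real \<times> 'a \<times> real" where
  "dext_LC x y = (case x of (s, u, t) \<Rightarrow> case y of (s', u', t') \<Rightarrow>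
     (\<mu> * t * s' + t * (b \<bullet> u') + A u \<bullet> u',
      LC inner br0 u u' + t *\<^sub>R (D u' - A u') - t' *\<^sub>R A u - (t * t') *\<^sub>R b,
      - \<mu> * t * t'))"

lemma LC_dext: "LC dext_metric gbr x y = dext_LC x y"
proof (rule LC_eqI[OF dext_metric_nondeg])
  fix w :: "real \<times> 'a \<times> real"
  obtain s u t s' u' t' s'' u'' t'' where xyw: "x = (s, u, t)" "y = (s', u', t')" "w = (s'', u'', t'')"
    by (cases x, cases y, cases w) auto
  have "K u'' \<bullet> u = - (K u \<bullet> u'')" "K u'' \<bullet> u' = - (K u' \<bullet> u'')"
    by (metis K_skew inner_commute)+
  moreover have "u \<bullet> D u'' = D u'' \<bullet> u" "u' \<bullet> D u'' = D u'' \<bullet> u'" "u \<bullet> D u' = D u' \<bullet> u"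
    "u' \<bullet> br0 u u'' = br0 u u'' \<bullet> u'" "u \<bullet> br0 u' u'' = br0 u' u'' \<bullet> u"
    by (simp_all add: inner_commute)
  moreover have "br0 u'' u = - br0 u u''" "br0 u'' u' = - br0 u' u''"
    by (rule br_anticomm)+
  ultimately show "2 * dext_metric (dext_LC x y) w
      = dext_metric (gbr x y) w + dext_metric (gbr w x) y + dext_metric (gbr w y) x"
    unfolding xyw dext_LC_def dext_metric_def dext_bracket_def
    by (simp add: inner_add_left inner_diff_left inner_LC A_def) (simp add: field_simps)
qed

lemma curv_dext:
  "curv dext_metric gbr x w y = dext_LC (gbr x w) y - (dext_LC x (dext_LC w y) - dext_LC w (dext_LC x y))"
  unfolding curv_def LC_dext ..

lemma dext_LC_linear_right:
  "dext_LC x (y + y') = dext_LC x y + dext_LC x y'" "dext_LC x (c *\<^sub>R y) = c *\<^sub>R dext_LC x y"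
  by (cases x, cases y, cases y'; simp add: dext_LC_def algebra_simps inner_add_right)+

lemma dext_LC_zero_right: "dext_LC x 0 = 0"
  using dext_LC_linear_right(2)[of x 0 0] by simp

lemma dext_LC_e_left: "dext_LC (c, 0, 0) y = 0"
  by (cases y) (simp add: dext_LC_def zero_prod_def)

lemma gbr_e: "gbr x (1, 0, 0) = (\<mu> * snd (snd x), 0, 0)" "gbr (1, 0, 0) x = (- \<mu> * snd (snd x), 0, 0)"
  by (cases x; simp add: dext_bracket_def)+

lemma curv_dext_e: "curv dext_metric gbr x (1, 0, 0) y = 0" "curv dext_metric gbr (1, 0, 0) w y = 0"
  by (simp_all only: curv_dext gbr_e dext_LC_e_left dext_LC_zero_right diff_self diff_zero)

lemma curv_dext_ebar_component: "snd (snd (curv dext_metric gbr x w y)) = 0"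
  by (simp add: curv_dext dext_LC_def dext_bracket_def split_beta)

definition dext_ric :: "real \<times> 'a \<times> real \<Rightarrow> real \<times> 'a \<times> real \<Rightarrow> real" where
  "dext_ric x y = ltrace (\<lambda>w. curv dext_metric gbr x w y)"

lemma linear_dext_ric: "linear (dext_ric x)"
proof -
  have "curv dext_metric gbr x w (y + y') = curv dext_metric gbr x w y + curv dext_metric gbr x w y'"
    "curv dext_metric gbr x w (c *\<^sub>R y) = c *\<^sub>R curv dext_metric gbr x w y" for w y y' c
    by (simp_all add: curv_dext dext_LC_linear_right algebra_simps)
  then show ?thesis
    by (intro linearI) (simp_all add: dext_ric_def ltrace_add ltrace_scale)
qed

lemma Ric_dext_eq_0_iff: "Ric dext_metric gbr x = 0 \<longleftrightarrow> (\<forall>y. dext_ric x y = 0)"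
proof -
  obtain z where z: "\<And>v. dext_metric z v = dext_ric x v"
    using dext_metric_represents[OF linear_dext_ric] by blast
  then have "Ric dext_metric gbr x = z"
    by (intro Ric_eqI[where m = dext_metric, OF dext_metric_nondeg]) (simp_all add: dext_ric_def)
  moreover have "z = 0 \<longleftrightarrow> (\<forall>v. dext_metric z v = dext_metric 0 v)"
    using dext_metric_nondeg by blast
  ultimately show ?thesis
    by (simp add: z)
qed

lemma einstein_dext_iff_ricci_flat: "einstein dext_metric gbr \<longleftrightarrow> ricci_flat dext_metric gbr"
proof
  assume "einstein dext_metric gbr"
  then obtain c where c: "\<And>u. Ric dext_metric gbr u = c *\<^sub>R u"
    unfolding einstein_def by blast
  have "Ric dext_metric gbr (1, 0, 0) = 0"
    by (simp add: Ric_dext_eq_0_iff dext_ric_def curv_dext_e ltrace_def)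
  then have "c = 0"
    using c[of "(1, 0, 0)"] by (simp add: zero_prod_def)
  then show "ricci_flat dext_metric gbr"
    using c by (simp add: ricci_flat_def)
qed (metis einstein_def ricci_flat_def scaleR_zero_left)

lemma dext_ric_eq_ltrace: "dext_ric x y = ltrace (\<lambda>u. fst (snd (curv dext_metric gbr x (0, u, 0) y)))"
  by (simp add: dext_ric_def ltrace_prod ltrace_real zero_prod_def curv_dext_e curv_dext_ebar_component)

lemma dext_ric_g0: "dext_ric (0, u, 0) (0, v, 0) = ltrace (\<lambda>w. curv inner br0 u w v)"
  unfolding dext_ric_eq_ltrace curv_dext by (simp add: curv_def dext_LC_def dext_bracket_def)

lemma linear_LC_left: "linear (\<lambda>x. LC inner br0 x v)"
  by (rule linearI) simp_all

lemma ltrace_gbr_g0: "ltrace (gbr (0, w, 0)) = ltrace (br0 w)"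
  by (simp add: ltrace_prod ltrace_real zero_prod_def dext_bracket_def ltrace_def)

lemma ltrace_A: "ltrace A = ltrace D"
proof -
  have "A x \<bullet> x = D x \<bullet> x" for x
    using K_skew[of x x] by (simp add: A_def inner_add_left inner_add_right inner_commute)
  then show ?thesis
    by (simp add: ltrace_def)
qed

lemma ltrace_A_A:
  "4 * ltrace (\<lambda>x. A (A x)) = ltrace (K \<circ> K) + 2 * ltrace (D \<circ> D) + 2 * ltrace (D \<circ> adjoint D)"
proof -
  have "4 * (A (A x) \<bullet> x)
      = K (K x) \<bullet> x + 2 * (D (D x) \<bullet> x) + D (adjoint D x) \<bullet> x + adjoint D (D x) \<bullet> x" for x
  proof -
    have "x \<bullet> D (D x) = D (D x) \<bullet> x" "K (D x) \<bullet> x = - (K x \<bullet> D x)"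
      "K (adjoint D x) \<bullet> x = - (D (K x) \<bullet> x)"
      using K_skew[of "D x" x] K_skew[of "adjoint D x" x] by (simp_all add: inner_commute)
    then show ?thesis
      by (simp add: A_def inner_add_left inner_add_right algebra_simps)
  qed
  then have "4 * ltrace (\<lambda>x. A (A x))
      = ltrace (\<lambda>x. K (K x)) + 2 * ltrace (\<lambda>x. D (D x)) + ltrace (\<lambda>x. D (adjoint D x))
        + ltrace (\<lambda>x. adjoint D (D x))"
    by (simp add: ltrace_def sum_distrib_left sum.distrib)
  then show ?thesis
    using ltrace_comp_commute[OF linear_adjoint_D linear_D] by (simp add: o_def)
qed

lemma curv_dext_ebar_g0_ebar:
  "fst (snd (curv dext_metric gbr (0, 0, 1) (0, x, 0) (0, 0, 1)))
     = D (A x) - A (D x) - A (A x) - LC inner br0 x b + \<mu> *\<^sub>R A x"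
  by (simp add: curv_dext dext_LC_def dext_bracket_def algebra_simps)

lemma curv_dext_ebar_g0_g0:
  "fst (snd (curv dext_metric gbr (0, 0, 1) (0, x, 0) (0, v, 0)))
     = LC inner br0 (D x) v - D (LC inner br0 x v) + A (LC inner br0 x v) + LC inner br0 x (D v - A v)"
  by (simp add: curv_dext dext_LC_def dext_bracket_def algebra_simps)

lemma dext_ric_ebar_ebar:
  "4 * dext_ric (0, 0, 1) (0, 0, 1) = 4 * ltrace (br0 b) + 4 * \<mu> * ltrace D - 2 * ltrace (D \<circ> D)
     - 2 * ltrace (D \<circ> adjoint D) - ltrace (K \<circ> K)"
proof -
  have "dext_ric (0, 0, 1) (0, 0, 1) = ltrace (\<lambda>x. D (A x)) - ltrace (\<lambda>x. A (D x))
      - ltrace (\<lambda>x. A (A x)) - ltrace (\<lambda>x. LC inner br0 x b) + \<mu> * ltrace A"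
    by (simp add: dext_ric_eq_ltrace curv_dext_ebar_g0_ebar ltrace_add ltrace_diff ltrace_scale)
  then show ?thesis
    using ltrace_comp_commute[OF linear_D linear_A] ltrace_LC_left[of b] ltrace_A ltrace_A_A
    by (simp add: algebra_simps)
qed

lemma dext_ric_ebar_g0:
  assumes unimodular: "\<And>w. ltrace (br0 w) = 0"
  shows "- 4 * dext_ric (0, 0, 1) (0, u, 0)
    = ltrace (\<lambda>v. adjoint (br0 (K v)) u) + 2 * ltrace (\<lambda>v. D (br0 u v) + adjoint D (br0 u v))"
proof -
  let ?S = "\<lambda>x. D x + adjoint D x"
  have "linear ?S"
    by (rule linearI) (simp_all add: scaleR_add_right)
  have S_sym: "?S x \<bullet> y = x \<bullet> ?S y" for x y
    by (simp add: inner_add_left inner_add_right inner_commute)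
  have "dext_ric (0, 0, 1) (0, u, 0) = ltrace (\<lambda>x. LC inner br0 (D x) u) - ltrace (\<lambda>x. D (LC inner br0 x u))
      + ltrace (\<lambda>x. A (LC inner br0 x u)) + ltrace (\<lambda>x. LC inner br0 x (D u - A u))"
    by (simp add: dext_ric_eq_ltrace curv_dext_ebar_g0_g0 ltrace_add ltrace_diff)
  also have "\<dots> = ltrace (\<lambda>x. A (LC inner br0 x u))"
    using ltrace_comp_commute[OF linear_LC_left linear_D] ltrace_LC_left unimodular
    by (simp add: ltrace_diff)
  also have "\<dots> = (ltrace (\<lambda>x. K (LC inner br0 x u)) + ltrace (\<lambda>x. ?S (LC inner br0 x u))) / 2"
    by (simp add: A_def ltrace_scale ltrace_add add.assoc)
  finally show ?thesis
    using ltrace_skew_LC_left[OF linear_K K_skew, of u]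
      ltrace_symmetric_LC_left[OF \<open>linear ?S\<close> S_sym, of u]
    by simp
qed

lemma ricci_flat_dext_iff: "ricci_flat dext_metric gbr \<longleftrightarrow> (\<forall>x y. dext_ric x y = 0)"
  by (simp add: ricci_flat_def Ric_dext_eq_0_iff)

lemma ricci_flat_g0_if_ricci_flat_dext:
  assumes "ricci_flat dext_metric gbr"
  shows "ricci_flat inner br0"
  unfolding ricci_flat_def
proof
  fix u
  show "Ric inner br0 u = 0"
    using assms
    by (intro Ric_eqI[where m = inner, OF vector_eq_rdot[THEN iffD1, rule_format]])
      (simp_all add: ricci_flat_dext_iff dext_ric_g0[symmetric])
qed

lemma unimodular_if_ricci_flat_dext:
  assumes "ricci_flat dext_metric gbr"
  shows "ltrace (br0 w) = 0"
  using assms by (intro ltrace_br_zero_if_ric_mean_curv) (simp add: ricci_flat_dext_iff dext_ric_g0[symmetric])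

end

theorem proposition4p2:
  fixes br0 :: "'a::euclidean_space \<Rightarrow> 'a \<Rightarrow> 'a"
    and K D :: "'a \<Rightarrow> 'a" and \<mu> :: real and b :: 'a
  assumes g0_lie: "lie_algebra br0"
    and K_lin: "linear K" and D_lin: "linear D"
    and K_skew: "\<And>u v. inner (K u) v = - inner u (K v)"
    and g_lie: "lie_algebra (dext_bracket br0 K D \<mu> b)"
  shows "einstein dext_metric (dext_bracket br0 K D \<mu> b) \<longleftrightarrow>
     ricci_flat dext_metric (dext_bracket br0 K D \<mu> b) \<and>
     ricci_flat inner br0 \<and>
     (\<forall>u. 4 * ltrace (br0 b) + 4 * \<mu> * ltrace D - 2 * ltrace (D \<circ> D)
            - 2 * ltrace (D \<circ> adjoint D) - ltrace (K \<circ> K) = 0 \<and>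
          ltrace (\<lambda>v. adjoint (br0 (K v)) u)
            + 2 * ltrace (\<lambda>v. D (br0 u v) + adjoint D (br0 u v))
            + 2 * ltrace (dext_bracket br0 K D \<mu> b (0, adjoint D u, 0))
            - 2 * ltrace (dext_bracket br0 K D \<mu> b (0, K u, 0)) = 0)"
proof -
  interpret double_extension br0 K D \<mu> b
    using g0_lie K_lin D_lin K_skew
    by (simp add: double_extension_def double_extension_axioms_def euclidean_lie_algebra_def)
  show ?thesis (is "_ \<longleftrightarrow> ?conditions")
  proof
    assume "einstein dext_metric gbr"
    then have flat: "ricci_flat dext_metric gbr"
      by (simp add: einstein_dext_iff_ricci_flat)
    then have ric_zero: "dext_ric x y = 0" for x y
      using ricci_flat_dext_iff by blast
    have unimodular: "ltrace (br0 w) = 0" for w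
      by (rule unimodular_if_ricci_flat_dext[OF flat])
    show ?conditions
      using flat ricci_flat_g0_if_ricci_flat_dext[OF flat]
        dext_ric_ebar_ebar dext_ric_ebar_g0[OF unimodular]
      by (simp add: ric_zero ltrace_gbr_g0 unimodular)
  qed (simp add: einstein_dext_iff_ricci_flat)
qed

end
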